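(* Let $F$ be a field and $L_1,\dots,L_m$ finite separable field extensions of $F$ with $[L_i:F]=n_i$. Let $n=\mathrm{lcm}(n_1,\dots,n_m)$ and $L=\prod_{i=1}^m L_i$. Let $\alpha_1,\dots,\alpha_{m-1}\in F^\times$. Then $$\Big(\alpha_1^{n/n_1},\alpha_2^{n/n_2},\dots,\alpha_{m-1}^{n/n_{m-1}},\prod_{i=1}^{m-1}\alpha_i^{-n/n_m}\Big)\in RT_{L/F}(F).$$
   Context: The multinorm torus $T_{L/F}$ is the kernel of $\prod_{i} R_{L_i/F}\mathbb{G}_m\to\mathbb{G}_m$, $(x_i)\mapsto\prod_i N_{L_i/F}(x_i)$. $RT_{L/F}(F)$ denotes the subgroup of $T_{L/F}(F)$ of elements $R$-equivalent to the identity, where $R$-equivalence is the equivalence relation generated by: $x_0\sim x_1$ if there is an $F$-rational map $f:\mathbb{P}^1\dashrightarrow T_{L/F}$ with $f(0)=x_0$ and $f(1)=x_1$. *)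

theory Defs
  imports "HOL-Combinatorics.Permutations" "HOL-Computational_Algebra.Polynomial"
          "HOL-Computational_Algebra.Fraction_Field"
begin

text \<open>All fields are realised as subfields of one ambient field (of a type class field).\<close>

definition is_subfield :: "'b::field set \<Rightarrow> bool" where
  "is_subfield S \<longleftrightarrow> 0 \<in> S \<and> 1 \<in> S \<and> (\<forall>x\<in>S. \<forall>y\<in>S. x + y \<in> S \<and> x * y \<in> S)
     \<and> (\<forall>x\<in>S. - x \<in> S) \<and> (\<forall>x\<in>S. x \<noteq> 0 \<longrightarrow> inverse x \<in> S)"

definition is_basis :: "'b::field set \<Rightarrow> 'b set \<Rightarrow> 'b list \<Rightarrow> bool" where
  "is_basis E M bs \<longleftrightarrow> set bs \<subseteq> M
     \<and> (\<forall>c. (\<forall>i<length bs. c i \<in> E) \<and> (\<Sum>i<length bs. c i * bs ! i) = 0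
            \<longrightarrow> (\<forall>i<length bs. c i = 0))
     \<and> (\<forall>y\<in>M. \<exists>c. (\<forall>i<length bs. c i \<in> E) \<and> y = (\<Sum>i<length bs. c i * bs ! i))"

definition finite_ext :: "'b::field set \<Rightarrow> 'b set \<Rightarrow> bool" where
  "finite_ext E M \<longleftrightarrow> (\<exists>bs. is_basis E M bs)"

definition ext_degree :: "'b::field set \<Rightarrow> 'b set \<Rightarrow> nat" where
  "ext_degree E M = (LEAST k. \<exists>bs. is_basis E M bs \<and> length bs = k)"

definition separable_ext :: "'b::field set \<Rightarrow> 'b set \<Rightarrow> bool" where
  "separable_ext E M \<longleftrightarrow> (\<forall>x\<in>M. \<exists>p. p \<noteq> 0 \<and> (\<forall>i. coeff p i \<in> E) \<and> poly p x = 0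
       \<and> (\<exists>a b. a * p + b * pderiv p = 1))"

text \<open>Norm N_{M/E}(x): determinant of multiplication by x w.r.t. an E-basis of M
  (Leibniz formula).\<close>
definition field_norm :: "'b::field set \<Rightarrow> 'b set \<Rightarrow> 'b \<Rightarrow> 'b" where
  "field_norm E M x = (SOME d. \<exists>bs c. is_basis E M bs \<and> (\<forall>i j. c i j \<in> E)
      \<and> (\<forall>j<length bs. x * bs ! j = (\<Sum>i<length bs. c i j * bs ! i))
      \<and> d = (\<Sum>p | p permutes {..<length bs}.
               of_int (sign p) * (\<Prod>i<length bs. c i (p i))))"

text \<open>For subfields F \<subseteq> S of the ambient field K, the subfield
  S(t) = S \<otimes>_F F(t) = { p/q : p \<in> S[t], q \<in> F[t], q \<noteq> 0 } of K(t).\<close>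
definition ratext :: "'k::field set \<Rightarrow> 'k set \<Rightarrow> 'k poly fract set" where
  "ratext F S = {Fract p q | p q. (\<forall>i. coeff p i \<in> S) \<and> (\<forall>i. coeff q i \<in> F) \<and> q \<noteq> 0}"

text \<open>F-points of the multinorm torus T_{L/F}, L = L_0 \<times> ... \<times> L_{m-1};
  tuples are functions nat \<Rightarrow> 'k, normalised to 1 outside {..<m}.\<close>
definition torus_pts :: "'k::field set \<Rightarrow> (nat \<Rightarrow> 'k set) \<Rightarrow> nat \<Rightarrow> (nat \<Rightarrow> 'k) set" where
  "torus_pts F L m = {x. (\<forall>i<m. x i \<in> L i \<and> x i \<noteq> 0)
      \<and> (\<Prod>i<m. field_norm F (L i) (x i)) = 1 \<and> (\<forall>i\<ge>m. x i = 1)}"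

text \<open>Elementary R-link: x = f(0), y = f(1) for an F-rational map f : P^1 \<dashrightarrow> T_{L/F}
  defined at 0 and 1. Such f is given by f_i = P_i/q with P_i \<in> L_i[t], q \<in> F[t],
  q(0), q(1) \<noteq> 0, and f(generic point) \<in> T, i.e. \<Prod> N_{L_i(t)/F(t)}(f_i) = 1.\<close>
definition R_step :: "'k::field set \<Rightarrow> (nat \<Rightarrow> 'k set) \<Rightarrow> nat \<Rightarrow> (nat \<Rightarrow> 'k) \<Rightarrow> (nat \<Rightarrow> 'k) \<Rightarrow> bool" where
  "R_step F L m x y \<longleftrightarrow> (\<exists>P q. (\<forall>i<m. \<forall>k. coeff (P i) k \<in> L i) \<and> (\<forall>k. coeff q k \<in> F)
      \<and> poly q 0 \<noteq> 0 \<and> poly q 1 \<noteq> 0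
      \<and> (\<Prod>i<m. field_norm (ratext F F) (ratext F (L i)) (Fract (P i) q)) = 1
      \<and> (\<forall>i<m. x i = poly (P i) 0 / poly q 0 \<and> y i = poly (P i) 1 / poly q 1)
      \<and> (\<forall>i\<ge>m. x i = 1 \<and> y i = 1))"

definition RT_pts :: "'k::field set \<Rightarrow> (nat \<Rightarrow> 'k set) \<Rightarrow> nat \<Rightarrow> (nat \<Rightarrow> 'k) set" where
  "RT_pts F L m = {x \<in> torus_pts F L m. equivclp (R_step F L m) (\<lambda>_. 1) x}"

end

(*
  The point is joined to 1 by a single rational curve.  Write d_i = [L_i:F], e_i = n / d_i and
  g_j(t) = 1 + (alpha_j - 1) t.  The map
    t |-> (g_0(t)^e_0, ..., g_(m-2)(t)^e_(m-2), (prod_j g_j(t))^(-e_(m-1)))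
  equals 1 at t = 0 and the given point at t = 1.  Its coordinates lie in F(t), and the norm from
  L_i(t) to F(t) of a scalar c is c^d_i, so the product of the norms is
  prod_j g_j^n * (prod_j g_j^n)^(-1) = 1: the curve lies in the torus.  This uses that an F-basis
  of L_i stays an F(t)-basis of L_i(t) and that the degree does not depend on the basis
  (Steinitz exchange).
*)

theory Submission
  imports Defs
begin

section \<open>Linear algebra over a subfield\<close>

context
  fixes E :: "'b::field set"
  assumes E: "is_subfield E"
begin

lemma subfield_zero: "0 \<in> E"
  and subfield_one: "1 \<in> E"
  and subfield_add: "x \<in> E \<Longrightarrow> y \<in> E \<Longrightarrow> x + y \<in> E"
  and subfield_mult: "x \<in> E \<Longrightarrow> y \<in> E \<Longrightarrow> x * y \<in> E"
  and subfield_uminus: "x \<in> E \<Longrightarrow> - x \<in> E"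
  using E unfolding is_subfield_def by auto

lemma subfield_inverse: "x \<in> E \<Longrightarrow> inverse x \<in> E"
  using E unfolding is_subfield_def by (cases "x = 0") auto

lemma subfield_diff: "x \<in> E \<Longrightarrow> y \<in> E \<Longrightarrow> x - y \<in> E"
  by (metis diff_conv_add_uminus subfield_add subfield_uminus)

lemma subfield_divide: "x \<in> E \<Longrightarrow> y \<in> E \<Longrightarrow> x / y \<in> E"
  by (metis divide_inverse subfield_mult subfield_inverse)

lemma subfield_sum: "(\<And>x. x \<in> S \<Longrightarrow> f x \<in> E) \<Longrightarrow> sum f S \<in> E"
  by (induction S rule: infinite_finite_induct) (auto simp: subfield_zero subfield_add)

lemma subfield_prod: "(\<And>x. x \<in> S \<Longrightarrow> f x \<in> E) \<Longrightarrow> prod f S \<in> E"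
  by (induction S rule: infinite_finite_induct) (auto simp: subfield_one subfield_mult)

lemma subfield_power: "x \<in> E \<Longrightarrow> x ^ k \<in> E"
  by (induction k) (auto simp: subfield_one subfield_mult)

end

lemma is_basis_spanning:
  "is_basis E M bs \<Longrightarrow> y \<in> M \<Longrightarrow> \<exists>c. (\<forall>i<length bs. c i \<in> E) \<and> y = (\<Sum>i<length bs. c i * bs ! i)"
  unfolding is_basis_def by blast

lemma is_basis_independent:
  assumes "is_basis E M bs" "\<forall>i<length bs. c i \<in> E" "(\<Sum>i<length bs. c i * bs ! i) = 0" "i < length bs"
  shows "c i = 0"
  using assms unfolding is_basis_def by blast

definition span_over :: "'b::field set \<Rightarrow> ('i \<Rightarrow> 'b) \<Rightarrow> 'i set \<Rightarrow> 'b set" where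
  "span_over E b J = {\<Sum>j\<in>J. a j * b j | a. \<forall>j\<in>J. a j \<in> E}"

definition dependent_over :: "'b::field set \<Rightarrow> ('i \<Rightarrow> 'b) \<Rightarrow> 'i set \<Rightarrow> bool" where
  "dependent_over E v I \<longleftrightarrow> (\<exists>c. (\<forall>i\<in>I. c i \<in> E) \<and> (\<Sum>i\<in>I. c i * v i) = 0 \<and> (\<exists>i\<in>I. c i \<noteq> 0))"

lemma span_over_empty: "span_over E b {} = {0}"
  by (auto simp: span_over_def)

lemma span_over_insert:
  assumes J: "finite J" "j \<notin> J"
  shows "y \<in> span_over E b (insert j J) \<longleftrightarrow> (\<exists>c\<in>E. y - c * b j \<in> span_over E b J)"
proof
  assume "y \<in> span_over E b (insert j J)"
  then obtain a where a: "\<forall>i\<in>insert j J. a i \<in> E" "y = (\<Sum>i\<in>insert j J. a i * b i)"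
    unfolding span_over_def by blast
  then have "y - a j * b j = (\<Sum>i\<in>J. a i * b i)"
    using J by simp
  with a(1) show "\<exists>c\<in>E. y - c * b j \<in> span_over E b J"
    unfolding span_over_def by blast
next
  assume "\<exists>c\<in>E. y - c * b j \<in> span_over E b J"
  then obtain c a where ca: "c \<in> E" "\<forall>i\<in>J. a i \<in> E" "y - c * b j = (\<Sum>i\<in>J. a i * b i)"
    unfolding span_over_def by blast
  have "(\<Sum>i\<in>insert j J. (a(j := c)) i * b i) = c * b j + (\<Sum>i\<in>J. a i * b i)"
    using J by (auto intro!: sum.cong)
  also have "\<dots> = y"
    using ca(3) by (simp add: algebra_simps)
  finally show "y \<in> span_over E b (insert j J)"
    using ca(1,2) unfolding span_over_def by (intro CollectI exI[of _ "a(j := c)"]) auto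
qed

lemma sum_permutes_scalar_matrix:
  fixes c :: "'a::comm_ring_1"
  assumes C: "\<forall>i<n. \<forall>j<n. C i j = (if i = j then c else 0)"
  shows "(\<Sum>p | p permutes {..<n}. of_int (sign p) * (\<Prod>i<n. C i (p i))) = c ^ n"
proof -
  let ?f = "\<lambda>p. of_int (sign p) * (\<Prod>i<n. C i (p i))"
  have "?f p = 0" if p: "p permutes {..<n}" "p \<noteq> id" for p
  proof -
    obtain i where i: "p i \<noteq> i"
      using p(2) by (metis eq_id_iff)
    then have "i < n" "p i < n"
      using p(1) by (meson lessThan_iff permutes_not_in permutes_in_image)+
    with i C have "C i (p i) = 0"
      by simp
    with \<open>i < n\<close> have "(\<Prod>i<n. C i (p i)) = 0"
      by (intro prod_zero) auto
    then show ?thesis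
      by simp
  qed
  then have "(\<Sum>p | p permutes {..<n}. ?f p) = ?f id"
    by (intro sum.mono_neutral_right[where S = "{id}", simplified])
      (auto simp: permutes_id finite_permutations)
  also have "\<dots> = c ^ n"
    using C by simp
  finally show ?thesis .
qed

context
  fixes E :: "'b::field set"
  assumes E: "is_subfield E"
begin

lemma span_over_diff:
  "x \<in> span_over E b J \<Longrightarrow> y \<in> span_over E b J \<Longrightarrow> x - y \<in> span_over E b J"
proof -
  assume "x \<in> span_over E b J" "y \<in> span_over E b J"
  then obtain a a' where "\<forall>j\<in>J. a j \<in> E" "\<forall>j\<in>J. a' j \<in> E"
    "x = (\<Sum>j\<in>J. a j * b j)" "y = (\<Sum>j\<in>J. a' j * b j)"
    by (auto simp: span_over_def)
  then show ?thesis
    unfolding span_over_def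
    by (intro CollectI exI[of _ "\<lambda>j. a j - a' j"])
      (auto simp: sum_subtractf left_diff_distrib subfield_diff[OF E])
qed

lemma span_over_scale:
  "c \<in> E \<Longrightarrow> x \<in> span_over E b J \<Longrightarrow> c * x \<in> span_over E b J"
proof -
  assume "c \<in> E" "x \<in> span_over E b J"
  then obtain a where "\<forall>j\<in>J. a j \<in> E" "x = (\<Sum>j\<in>J. a j * b j)"
    by (auto simp: span_over_def)
  with \<open>c \<in> E\<close> show ?thesis
    unfolding span_over_def
    by (intro CollectI exI[of _ "\<lambda>j. c * a j"])
      (auto simp: sum_distrib_left mult.assoc subfield_mult[OF E])
qed

lemma dependent_over_pivot:
  assumes I: "finite I" "k \<in> I" and s: "\<forall>i\<in>I. s i \<in> E"
    and dep: "dependent_over E (\<lambda>i. v i - s i * v k) (I - {k})"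
  shows "dependent_over E v I"
proof -
  from dep obtain c where c: "\<forall>i\<in>I - {k}. c i \<in> E" "(\<Sum>i\<in>I - {k}. c i * (v i - s i * v k)) = 0"
    "\<exists>i\<in>I - {k}. c i \<noteq> 0"
    unfolding dependent_over_def by blast
  define c' where "c' i = (if i = k then - (\<Sum>i\<in>I - {k}. c i * s i) else c i)" for i
  have "(\<Sum>i\<in>I. c' i * v i) = c' k * v k + (\<Sum>i\<in>I - {k}. c i * v i)"
    using I by (simp add: sum.remove c'_def)
  also have "\<dots> = (\<Sum>i\<in>I - {k}. c i * (v i - s i * v k))"
  proof -
    have "(\<Sum>i\<in>I - {k}. c i * (s i * v k)) = (\<Sum>i\<in>I - {k}. c i * s i) * v k"
      by (simp add: sum_distrib_right mult.assoc)
    then show ?thesis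
      by (simp add: c'_def right_diff_distrib sum_subtractf)
  qed
  finally have "(\<Sum>i\<in>I. c' i * v i) = 0"
    using c(2) by simp
  moreover have "\<forall>i\<in>I. c' i \<in> E"
    using c(1) s by (auto simp: c'_def intro!: subfield_uminus[OF E] subfield_sum[OF E] subfield_mult[OF E])
  moreover have "\<exists>i\<in>I. c' i \<noteq> 0"
    using c(3) by (auto simp: c'_def)
  ultimately show ?thesis
    unfolding dependent_over_def by blast
qed

lemma span_over_eliminate:
  assumes "x - a * w \<in> span_over E b J" "y - c * w \<in> span_over E b J" "a \<in> E" "c \<in> E" "c \<noteq> 0"
  shows "x - a / c * y \<in> span_over E b J"
proof -
  have "x - a / c * y = (x - a * w) - a / c * (y - c * w)"
    using assms(5) by (simp add: field_simps)
  also have "\<dots> \<in> span_over E b J"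
    using subfield_divide[OF E assms(3,4)]
    by (rule span_over_diff[OF assms(1) span_over_scale[OF _ assms(2)]])
  finally show ?thesis .
qed

lemma dependent_over_if_card_gt:
  assumes "finite J" "finite I" "card J < card I" "\<forall>i\<in>I. v i \<in> span_over E b J"
  shows "dependent_over E v I"
  using assms
proof (induction J arbitrary: I v rule: finite_induct)
  case empty
  then obtain i0 where "i0 \<in> I"
    by fastforce
  with empty show ?case
    unfolding dependent_over_def span_over_empty
    by (intro exI[of _ "\<lambda>i. if i = i0 then 1 else 0"]) (auto simp: subfield_zero[OF E] subfield_one[OF E])
next
  case (insert j0 J)
  have "\<forall>i\<in>I. \<exists>a\<in>E. v i - a * b j0 \<in> span_over E b J"
    using insert.prems(3) span_over_insert[OF insert.hyps(1,2)] by blast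
  then obtain A where A: "\<forall>i\<in>I. A i \<in> E \<and> v i - A i * b j0 \<in> span_over E b J"
    by metis
  show ?case
  proof (cases "\<forall>i\<in>I. A i = 0")
    case True
    with A insert.prems insert.hyps show ?thesis
      by (intro insert.IH) auto
  next
    case False
    then obtain k where k: "k \<in> I" "A k \<noteq> 0"
      by blast
    let ?s = "\<lambda>i. A i / A k"
    have "dependent_over E (\<lambda>i. v i - ?s i * v k) (I - {k})"
    proof (rule insert.IH)
      show "finite (I - {k})"
        using insert.prems(1) by simp
      show "card J < card (I - {k})"
        using insert.prems(1,2) insert.hyps k(1) by simp
      show "\<forall>i\<in>I - {k}. v i - ?s i * v k \<in> span_over E b J"
        using A k by (intro ballI span_over_eliminate[where w = "b j0"]) auto
    qed
    moreover have "\<forall>i\<in>I. ?s i \<in> E"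
      using A k(1) by (auto intro: subfield_divide[OF E])
    ultimately show ?thesis
      by (intro dependent_over_pivot[OF insert.prems(1) k(1)])
  qed
qed

lemma is_basis_length_le:
  assumes B: "is_basis E M bs" and C: "is_basis E M cs"
  shows "length cs \<le> length bs"
proof (rule ccontr)
  assume "\<not> ?thesis"
  moreover have "cs ! i \<in> span_over E (nth bs) {..<length bs}" if "i < length cs" for i
  proof -
    have "cs ! i \<in> M"
      using C nth_mem[OF that] unfolding is_basis_def by blast
    then obtain a where "\<forall>j<length bs. a j \<in> E" "cs ! i = (\<Sum>j<length bs. a j * bs ! j)"
      using is_basis_spanning[OF B] by blast
    then show ?thesis
      unfolding span_over_def by auto
  qed
  ultimately have "dependent_over E (nth cs) {..<length cs}"
    by (intro dependent_over_if_card_gt[where J = "{..<length bs}"]) auto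
  with C show False
    unfolding is_basis_def dependent_over_def by auto
qed

lemma ext_degree_eq_length:
  assumes "is_basis E M bs"
  shows "ext_degree E M = length bs"
  unfolding ext_degree_def
proof (rule Least_equality)
  show "\<exists>bs'. is_basis E M bs' \<and> length bs' = length bs"
    using assms by blast
  show "length bs \<le> k" if "\<exists>bs'. is_basis E M bs' \<and> length bs' = k" for k
    using that assms is_basis_length_le by blast
qed

lemma scalar_matrix_unique:
  assumes B: "is_basis E M bs" and "c \<in> E" and C: "\<forall>i j. C i j \<in> E"
    and j: "j < length bs" and Cj: "c * bs ! j = (\<Sum>i<length bs. C i j * bs ! i)"
  shows "\<forall>i<length bs. C i j = (if i = j then c else 0)"
proof -
  let ?d = "\<lambda>i. C i j - (if i = j then c else 0)"
  have "(\<Sum>i<length bs. (if i = j then c else 0) * bs ! i) = c * bs ! j"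
    using j by (simp add: if_distrib[of "\<lambda>x. x * _"] cong: if_cong)
  then have "(\<Sum>i<length bs. ?d i * bs ! i) = 0"
    using Cj by (simp add: left_diff_distrib sum_subtractf)
  moreover have "\<forall>i<length bs. ?d i \<in> E"
    using C \<open>c \<in> E\<close> by (simp add: subfield_diff[OF E] subfield_zero[OF E])
  ultimately have "\<forall>i<length bs. ?d i = 0"
    using is_basis_independent[OF B, where c = ?d] by blast
  then show ?thesis
    by simp
qed

lemma field_norm_scalar:
  assumes M: "finite_ext E M" and c: "c \<in> E"
  shows "field_norm E M c = c ^ ext_degree E M"
proof -
  obtain bs where B: "is_basis E M bs"
    using M unfolding finite_ext_def by blast
  let ?D = "\<lambda>i j. if i = j then c else 0"
  have D: "\<forall>i j. ?D i j \<in> E"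
    using c subfield_zero[OF E] by simp
  have rep: "\<forall>j<length bs. c * bs ! j = (\<Sum>i<length bs. ?D i j * bs ! i)"
    by (simp add: if_distrib[of "\<lambda>x. x * _"] cong: if_cong)
  show ?thesis
    unfolding field_norm_def
  proof (rule someI2_ex) \<comment> \<open>every choice of basis and matrix in the definition gives \<open>c ^ ext_degree E M\<close>\<close>
    show "\<exists>d bs C. is_basis E M bs \<and> (\<forall>i j. C i j \<in> E)
      \<and> (\<forall>j<length bs. c * bs ! j = (\<Sum>i<length bs. C i j * bs ! i))
      \<and> d = (\<Sum>p | p permutes {..<length bs}. of_int (sign p) * (\<Prod>i<length bs. C i (p i)))"
      by (rule exI, intro exI conjI, rule B, rule D, rule rep, rule refl)
  next
    fix d
    assume "\<exists>bs C. is_basis E M bs \<and> (\<forall>i j. C i j \<in> E)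
      \<and> (\<forall>j<length bs. c * bs ! j = (\<Sum>i<length bs. C i j * bs ! i))
      \<and> d = (\<Sum>p | p permutes {..<length bs}. of_int (sign p) * (\<Prod>i<length bs. C i (p i)))"
    then obtain bs' C where B': "is_basis E M bs'" and C: "\<forall>i j. C i j \<in> E"
      and rep: "\<forall>j<length bs'. c * bs' ! j = (\<Sum>i<length bs'. C i j * bs' ! i)"
      and d: "d = (\<Sum>p | p permutes {..<length bs'}. of_int (sign p) * (\<Prod>i<length bs'. C i (p i)))"
      by blast
    have "\<forall>i<length bs'. \<forall>j<length bs'. C i j = (if i = j then c else 0)"
      using scalar_matrix_unique[OF B' c C] rep by blast
    then show "d = c ^ ext_degree E M"
      unfolding d ext_degree_eq_length[OF B'] by (rule sum_permutes_scalar_matrix)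
  qed
qed

end

section \<open>Rational functions over a subfield\<close>

definition polys_over :: "'k::field set \<Rightarrow> 'k poly set" where
  "polys_over S = {p. \<forall>i. coeff p i \<in> S}"

lemma polys_over_mono: "F \<subseteq> S \<Longrightarrow> p \<in> polys_over F \<Longrightarrow> p \<in> polys_over S"
  by (auto simp: polys_over_def)

lemma ratext_iff:
  "y \<in> ratext F S \<longleftrightarrow> (\<exists>p q. y = Fract p q \<and> p \<in> polys_over S \<and> q \<in> polys_over F \<and> q \<noteq> 0)"
  unfolding ratext_def polys_over_def by blast

lemma Fract_eq_0_iff: "(q::'a::idom) \<noteq> 0 \<Longrightarrow> Fract p q = 0 \<longleftrightarrow> p = 0"
  by (simp add: Zero_fract_def eq_fract)

lemma Fract_add_same_denom: "(q::'a::idom) \<noteq> 0 \<Longrightarrow> Fract a q + Fract b q = Fract (a + b) q"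
  by (simp add: eq_fract algebra_simps)

lemma Fract_sum_same_denom:
  "(q::'a::idom) \<noteq> 0 \<Longrightarrow> (\<Sum>i\<in>I. Fract (f i) q) = Fract (sum f I) q"
  by (induction I rule: infinite_finite_induct) (simp_all add: fract_collapse Fract_add_same_denom del: add_fract)

lemma Fract_sum_smult:
  "(q::'a::idom poly) \<noteq> 0 \<Longrightarrow>
    (\<Sum>i\<in>I. Fract (p i) q * Fract [:b i:] 1) = Fract (\<Sum>i\<in>I. smult (b i) (p i)) q"
  by (simp add: Fract_sum_same_denom)

lemma Fract_mult_1: "Fract ((a::'a::idom) * b) 1 = Fract a 1 * Fract b 1"
  by simp

lemma Fract_prod_1: "Fract (prod (f :: _ \<Rightarrow> 'a::idom) I) 1 = (\<Prod>i\<in>I. Fract (f i) 1)"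
  by (induction I rule: infinite_finite_induct) (simp_all add: One_fract_def Fract_mult_1)

lemma Fract_power_1: "Fract ((a::'a::idom) ^ k) 1 = Fract a 1 ^ k"
  by (induction k) (simp_all add: One_fract_def Fract_mult_1)

context
  fixes S :: "'k::field set"
  assumes S: "is_subfield S"
begin

lemma polys_over_zero: "0 \<in> polys_over S"
  by (simp add: polys_over_def subfield_zero[OF S])

lemma polys_over_pCons: "a \<in> S \<Longrightarrow> p \<in> polys_over S \<Longrightarrow> pCons a p \<in> polys_over S"
  by (simp add: polys_over_def coeff_pCons split: nat.split)

lemma polys_over_one: "1 \<in> polys_over S"
  using polys_over_pCons[OF subfield_one[OF S] polys_over_zero] by (simp add: one_pCons)

lemma polys_over_add: "p \<in> polys_over S \<Longrightarrow> q \<in> polys_over S \<Longrightarrow> p + q \<in> polys_over S"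
  by (simp add: polys_over_def subfield_add[OF S])

lemma polys_over_uminus: "p \<in> polys_over S \<Longrightarrow> - p \<in> polys_over S"
  by (simp add: polys_over_def subfield_uminus[OF S])

lemma polys_over_mult: "p \<in> polys_over S \<Longrightarrow> q \<in> polys_over S \<Longrightarrow> p * q \<in> polys_over S"
  unfolding polys_over_def by (auto simp: coeff_mult intro!: subfield_sum[OF S] subfield_mult[OF S])

lemma polys_over_power: "p \<in> polys_over S \<Longrightarrow> p ^ k \<in> polys_over S"
  by (induction k) (auto intro: polys_over_one polys_over_mult)

lemma polys_over_prod: "(\<And>x. x \<in> I \<Longrightarrow> f x \<in> polys_over S) \<Longrightarrow> prod f I \<in> polys_over S"
  by (induction I rule: infinite_finite_induct) (auto intro: polys_over_one polys_over_mult)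

lemma ratext_subfield: "is_subfield (ratext S S)"
  unfolding is_subfield_def
proof (intro conjI ballI impI)
  show "0 \<in> ratext S S" "1 \<in> ratext S S"
    unfolding ratext_iff Zero_fract_def One_fract_def
    by (intro exI[of _ 0] exI[of _ 1] exI[of _ 1] conjI; simp add: polys_over_zero polys_over_one)+
  fix x assume "x \<in> ratext S S"
  then obtain a b where x: "x = Fract a b" "a \<in> polys_over S" "b \<in> polys_over S" "b \<noteq> 0"
    unfolding ratext_iff by blast
  show "- x \<in> ratext S S"
    unfolding ratext_iff using x by (auto intro: polys_over_uminus)
  show "inverse x \<in> ratext S S" if "x \<noteq> 0"
    unfolding ratext_iff using x that by (auto simp: Fract_eq_0_iff)
  fix y assume "y \<in> ratext S S"
  then obtain c d where y: "y = Fract c d" "c \<in> polys_over S" "d \<in> polys_over S" "d \<noteq> 0"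
    unfolding ratext_iff by blast
  show "x + y \<in> ratext S S"
    unfolding ratext_iff using x y
    by (intro exI[of _ "a * d + c * b"] exI[of _ "b * d"]) (simp add: polys_over_add polys_over_mult)
  show "x * y \<in> ratext S S"
    unfolding ratext_iff using x y
    by (intro exI[of _ "a * c"] exI[of _ "b * d"]) (simp add: polys_over_mult)
qed

end

lemma ratext_common_denom:
  assumes F: "is_subfield F" and S: "is_subfield S" and FS: "F \<subseteq> S"
    and "finite I" and "\<forall>i\<in>I. c i \<in> ratext F S"
  shows "\<exists>q p. q \<noteq> 0 \<and> q \<in> polys_over F \<and> (\<forall>i\<in>I. p i \<in> polys_over S \<and> c i = Fract (p i) q)"
  using assms(4,5)
proof (induction I rule: finite_induct)
  case empty
  show ?case
    using polys_over_one[OF F] by (intro exI[of _ 1]) simp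
next
  case (insert x I)
  obtain q p where q: "q \<noteq> 0" "q \<in> polys_over F"
    and p: "\<forall>i\<in>I. p i \<in> polys_over S \<and> c i = Fract (p i) q"
    using insert.IH insert.prems by auto
  have "c x \<in> ratext F S"
    using insert.prems by simp
  then obtain a b where ab: "c x = Fract a b" "a \<in> polys_over S" "b \<in> polys_over F" "b \<noteq> 0"
    unfolding ratext_iff by blast
  let ?p = "\<lambda>i. if i = x then q * a else p i * b"
  have "?p i \<in> polys_over S \<and> c i = Fract (?p i) (q * b)" if "i \<in> insert x I" for i
  proof (cases "i = x")
    case True
    then show ?thesis
      using ab q polys_over_mono[OF FS] by (simp add: polys_over_mult[OF S] mult_fract_cancel)
  next
    case False
    then have "Fract (p i * b) (q * b) = Fract (p i) q"
      using ab(4) by (metis mult.commute mult_fract_cancel)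
    with False that show ?thesis
      using ab p polys_over_mono[OF FS] by (simp add: polys_over_mult[OF S])
  qed
  moreover have "q * b \<noteq> 0" "q * b \<in> polys_over F"
    using q ab by (auto intro: polys_over_mult[OF F])
  ultimately show ?case
    by (intro exI[of _ "q * b"] exI[of _ ?p]) blast
qed

context
  fixes F S :: "'k::field set"
  assumes F: "is_subfield F" and S: "is_subfield S"
begin

context
  fixes bs :: "'k list"
  assumes B: "is_basis F S bs"
begin

lemma polys_over_basis_expansion:
  "P \<in> polys_over S \<Longrightarrow> \<exists>p. (\<forall>i<length bs. p i \<in> polys_over F) \<and> P = (\<Sum>i<length bs. smult (bs ! i) (p i))"
proof (induction P rule: pCons_induct)
  case 0
  show ?case
    using polys_over_zero[OF F] by (intro exI[of _ "\<lambda>_. 0"]) simp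
next
  case (pCons a P)
  have coeffs: "\<forall>i. coeff (pCons a P) i \<in> S"
    using pCons.prems by (simp add: polys_over_def)
  have "a \<in> S" "P \<in> polys_over S"
    using coeffs[rule_format, of 0] coeffs[rule_format, of "Suc _"] by (simp_all add: polys_over_def)
  obtain c where c: "\<forall>i<length bs. c i \<in> F" "a = (\<Sum>i<length bs. c i * bs ! i)"
    using is_basis_spanning[OF B \<open>a \<in> S\<close>] by blast
  obtain p where p: "\<forall>i<length bs. p i \<in> polys_over F" "P = (\<Sum>i<length bs. smult (bs ! i) (p i))"
    using pCons.IH \<open>P \<in> polys_over S\<close> by blast
  have "pCons a P = (\<Sum>i<length bs. smult (bs ! i) (pCons (c i) (p i)))"
  proof (rule poly_eqI)
    fix n
    show "coeff (pCons a P) n = coeff (\<Sum>i<length bs. smult (bs ! i) (pCons (c i) (p i))) n"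
    proof (cases n)
      case 0
      then show ?thesis
        using c(2) by (simp add: coeff_sum mult.commute)
    next
      case (Suc m)
      then show ?thesis
        using p(2) by (simp add: coeff_sum)
    qed
  qed
  moreover have "\<forall>i<length bs. pCons (c i) (p i) \<in> polys_over F"
    using c(1) p(1) by (simp add: polys_over_pCons[OF F])
  ultimately show ?case
    by (intro exI[of _ "\<lambda>i. pCons (c i) (p i)"]) blast
qed

lemma polys_over_basis_independent:
  assumes p: "\<forall>i<length bs. p i \<in> polys_over F" and sum0: "(\<Sum>i<length bs. smult (bs ! i) (p i)) = 0"
  shows "\<forall>i<length bs. p i = 0"
proof -
  have "coeff (p i) n = 0" if i: "i < length bs" for i n
  proof -
    have "(\<Sum>i<length bs. coeff (p i) n * bs ! i) = 0"
      using arg_cong[OF sum0, of "\<lambda>P. coeff P n"] by (simp add: coeff_sum mult.commute)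
    moreover have "\<forall>i<length bs. coeff (p i) n \<in> F"
      using p by (simp add: polys_over_def)
    ultimately show ?thesis
      using is_basis_independent[OF B, where c = "\<lambda>i. coeff (p i) n"] i by blast
  qed
  then show ?thesis
    by (auto intro: poly_eqI)
qed

lemma ratext_basis_independent:
  assumes c: "\<forall>i<length bs. c i \<in> ratext F F" and c0: "(\<Sum>i<length bs. c i * Fract [:bs ! i:] 1) = 0"
  shows "\<forall>i<length bs. c i = 0"
proof -
  obtain q p where q: "q \<noteq> 0" and p: "\<forall>i<length bs. p i \<in> polys_over F \<and> c i = Fract (p i) q"
    using ratext_common_denom[OF F F subset_refl, of "{..<length bs}" c] c by auto
  have "(\<Sum>i<length bs. c i * Fract [:bs ! i:] 1) = (\<Sum>i<length bs. Fract (p i) q * Fract [:bs ! i:] 1)"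
    using p by (intro sum.cong) simp_all
  also have "\<dots> = Fract (\<Sum>i<length bs. smult (bs ! i) (p i)) q"
    by (rule Fract_sum_smult[OF q])
  finally have "(\<Sum>i<length bs. smult (bs ! i) (p i)) = 0"
    using c0 Fract_eq_0_iff[OF q] by simp
  then have "\<forall>i<length bs. p i = 0"
    using p by (intro polys_over_basis_independent) simp_all
  then show ?thesis
    using p by (simp add: fract_collapse)
qed

lemma ratext_basis_spanning:
  assumes "y \<in> ratext F S"
  shows "\<exists>c. (\<forall>i<length bs. c i \<in> ratext F F) \<and> y = (\<Sum>i<length bs. c i * Fract [:bs ! i:] 1)"
proof -
  obtain P q where y: "y = Fract P q" "P \<in> polys_over S" "q \<in> polys_over F" "q \<noteq> 0"
    using assms unfolding ratext_iff by blast
  obtain p where p: "\<forall>i<length bs. p i \<in> polys_over F" "P = (\<Sum>i<length bs. smult (bs ! i) (p i))"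
    using polys_over_basis_expansion[OF y(2)] by blast
  have "y = Fract (\<Sum>i<length bs. smult (bs ! i) (p i)) q"
    using y(1) p(2) by simp
  also have "\<dots> = (\<Sum>i<length bs. Fract (p i) q * Fract [:bs ! i:] 1)"
    by (rule Fract_sum_smult[OF y(4), symmetric])
  finally have "y = (\<Sum>i<length bs. Fract (p i) q * Fract [:bs ! i:] 1)" .
  moreover have "\<forall>i<length bs. Fract (p i) q \<in> ratext F F"
    using p(1) y(3,4) unfolding ratext_iff by blast
  ultimately show ?thesis
    by (intro exI[of _ "\<lambda>i. Fract (p i) q"]) blast
qed

lemma is_basis_ratext: "is_basis (ratext F F) (ratext F S) (map (\<lambda>b. Fract [:b:] 1) bs)"
proof -
  have "Fract [:b:] 1 \<in> ratext F S" if "b \<in> set bs" for b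
  proof -
    have "[:b:] \<in> polys_over S"
      using B that unfolding is_basis_def by (auto intro: polys_over_pCons[OF S] polys_over_zero[OF S])
    then show ?thesis
      unfolding ratext_iff using polys_over_one[OF F] by (intro exI[of _ "[:b:]"] exI[of _ 1]) simp
  qed
  moreover have "(\<Sum>i<length bs. c i * map (\<lambda>b. Fract [:b:] 1) bs ! i)
      = (\<Sum>i<length bs. c i * Fract [:bs ! i:] 1)" for c
    by (intro sum.cong) auto
  ultimately show ?thesis
    unfolding is_basis_def using ratext_basis_independent ratext_basis_spanning by auto
qed

end

lemma finite_ext_ratext: "finite_ext F S \<Longrightarrow> finite_ext (ratext F F) (ratext F S)"
  using is_basis_ratext unfolding finite_ext_def by blast

lemma ext_degree_ratext:
  assumes "finite_ext F S"
  shows "ext_degree (ratext F F) (ratext F S) = ext_degree F S"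
proof -
  obtain bs where "is_basis F S bs"
    using assms unfolding finite_ext_def by blast
  then have "ext_degree (ratext F F) (ratext F S) = length bs"
    using ext_degree_eq_length[OF ratext_subfield[OF F] is_basis_ratext] by simp
  with \<open>is_basis F S bs\<close> show ?thesis
    using ext_degree_eq_length[OF F] by simp
qed

end

section \<open>The rational curve\<close>

definition norm_one_tuple :: "(nat \<Rightarrow> nat) \<Rightarrow> nat \<Rightarrow> nat \<Rightarrow> (nat \<Rightarrow> 'a::field) \<Rightarrow> nat \<Rightarrow> 'a" where
  "norm_one_tuple d n k a i =
    (if i < k then a i ^ (n div d i) else if i = k then inverse (\<Prod>j<k. a j ^ (n div d k)) else 1)"

lemma norm_one_tuple_one: "norm_one_tuple d n k (\<lambda>_. 1) = (\<lambda>_. 1)"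
  by (simp add: norm_one_tuple_def fun_eq_iff)

lemma prod_norm_one_tuple_power:
  assumes d: "\<forall>i\<le>k. d i dvd n" and a: "\<forall>j<k. a j \<noteq> 0"
  shows "(\<Prod>i<Suc k. norm_one_tuple d n k a i ^ d i) = 1"
proof -
  have "(\<Prod>i<k. (a i ^ (n div d i)) ^ d i) = (\<Prod>i<k. a i ^ n)"
    using d by (intro prod.cong) (simp_all add: power_mult[symmetric])
  moreover have "inverse (\<Prod>j<k. a j ^ (n div d k)) ^ d k = inverse (\<Prod>j<k. a j ^ n)"
    using d by (simp add: power_inverse prod_power_distrib power_mult[symmetric])
  moreover have "(\<Prod>j<k. a j ^ n) \<noteq> 0"
    using a by simp
  ultimately show ?thesis
    by (simp add: norm_one_tuple_def)
qed

lemma norm_one_tuple_in_subfield: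
  assumes E: "is_subfield E" and a: "\<forall>j<k. a j \<in> E \<and> a j \<noteq> 0"
  shows "norm_one_tuple d n k a i \<in> E" "norm_one_tuple d n k a i \<noteq> 0"
  using a by (auto simp: norm_one_tuple_def
      intro!: subfield_one[OF E] subfield_power[OF E] subfield_inverse[OF E] subfield_prod[OF E])

lemma prod_field_norm_norm_one_tuple:
  assumes E: "is_subfield E" and M: "\<forall>i\<le>k. finite_ext E (M i) \<and> ext_degree E (M i) = d i"
    and d: "\<forall>i\<le>k. d i dvd n" and a: "\<forall>j<k. a j \<in> E \<and> a j \<noteq> 0"
  shows "(\<Prod>i<Suc k. field_norm E (M i) (norm_one_tuple d n k a i)) = 1"
proof -
  have "(\<Prod>i<Suc k. field_norm E (M i) (norm_one_tuple d n k a i)) = (\<Prod>i<Suc k. norm_one_tuple d n k a i ^ d i)"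
    using M norm_one_tuple_in_subfield(1)[OF E a] by (intro prod.cong) (simp_all add: field_norm_scalar[OF E])
  also have "\<dots> = 1"
    using d a by (intro prod_norm_one_tuple_power) simp_all
  finally show ?thesis .
qed

lemma norm_one_tuple_in_torus_pts:
  assumes F: "is_subfield F" and L: "\<forall>i\<le>k. F \<subseteq> L i \<and> finite_ext F (L i)"
    and d: "\<forall>i\<le>k. ext_degree F (L i) dvd n" and \<alpha>: "\<forall>j<k. \<alpha> j \<in> F \<and> \<alpha> j \<noteq> 0"
  shows "norm_one_tuple (\<lambda>i. ext_degree F (L i)) n k \<alpha> \<in> torus_pts F L (Suc k)"
proof -
  let ?x = "norm_one_tuple (\<lambda>i. ext_degree F (L i)) n k \<alpha>"
  have "?x i \<in> L i" "?x i \<noteq> 0" if "i < Suc k" for i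
  proof -
    have "F \<subseteq> L i"
      using L that by (simp add: less_Suc_eq_le)
    then show "?x i \<in> L i" "?x i \<noteq> 0"
      using norm_one_tuple_in_subfield[OF F \<alpha>] by auto
  qed
  moreover have "(\<Prod>i<Suc k. field_norm F (L i) (?x i)) = 1"
    using L d \<alpha> by (intro prod_field_norm_norm_one_tuple[OF F]) auto
  moreover have "?x i = 1" if "Suc k \<le> i" for i
    using that by (simp add: norm_one_tuple_def)
  ultimately show ?thesis
    unfolding torus_pts_def by blast
qed

text \<open>\<open>R_step\<close> asks for the coordinates of a curve over one common denominator.\<close>

definition tuple_denom :: "(nat \<Rightarrow> nat) \<Rightarrow> nat \<Rightarrow> nat \<Rightarrow> (nat \<Rightarrow> 'a::comm_semiring_1) \<Rightarrow> 'a" where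
  "tuple_denom d n k g = (\<Prod>j<k. g j ^ (n div d k))"

definition tuple_numer :: "(nat \<Rightarrow> nat) \<Rightarrow> nat \<Rightarrow> nat \<Rightarrow> (nat \<Rightarrow> 'a::comm_semiring_1) \<Rightarrow> nat \<Rightarrow> 'a" where
  "tuple_numer d n k g i = (if i < k then g i ^ (n div d i) * tuple_denom d n k g else 1)"

lemma Fract_tuple_numer:
  assumes "\<forall>j<k. g j \<noteq> 0" and "i \<le> k"
  shows "Fract (tuple_numer d n k g i) (tuple_denom d n k g) = norm_one_tuple d n k (\<lambda>j. Fract (g j) 1) i"
proof -
  let ?q = "tuple_denom d n k g"
  have q: "?q \<noteq> 0"
    using assms(1) by (simp add: tuple_denom_def)
  have "(\<Prod>j<k. Fract (g j) 1 ^ (n div d k)) = Fract ?q 1"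
    by (simp add: tuple_denom_def Fract_prod_1 Fract_power_1)
  then have "inverse (\<Prod>j<k. Fract (g j) 1 ^ (n div d k)) = Fract 1 ?q"
    by simp
  moreover have "Fract (g i ^ (n div d i) * ?q) ?q = Fract (g i) 1 ^ (n div d i)"
    using q by (simp add: eq_fract Fract_power_1[symmetric])
  ultimately show ?thesis
    using assms(2) by (simp add: tuple_numer_def norm_one_tuple_def)
qed

lemma poly_tuple_numer_divide:
  assumes "poly (tuple_denom d n k g) t \<noteq> 0" and "i \<le> k"
  shows "poly (tuple_numer d n k g i) t / poly (tuple_denom d n k g) t = norm_one_tuple d n k (\<lambda>j. poly (g j) t) i"
  using assms by (auto simp: tuple_numer_def tuple_denom_def norm_one_tuple_def poly_prod divide_inverse)

lemma polys_over_tuple_numer_denom: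
  assumes "is_subfield F" and "\<forall>j<k. g j \<in> polys_over F"
  shows "tuple_denom d n k g \<in> polys_over F" "tuple_numer d n k g i \<in> polys_over F"
  using assms by (auto simp: tuple_numer_def tuple_denom_def
      intro!: polys_over_prod polys_over_power polys_over_mult polys_over_one)

lemma prod_field_norm_ratext_tuple:
  assumes F: "is_subfield F" and L: "\<forall>i\<le>k. is_subfield (L i) \<and> finite_ext F (L i)"
    and d: "\<forall>i\<le>k. ext_degree F (L i) dvd n" and g: "\<forall>j<k. g j \<in> polys_over F \<and> g j \<noteq> 0"
  defines "D \<equiv> \<lambda>i. ext_degree F (L i)"
  shows "(\<Prod>i<Suc k. field_norm (ratext F F) (ratext F (L i))
           (Fract (tuple_numer D n k g i) (tuple_denom D n k g))) = 1"
proof -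
  have "(\<Prod>i<Suc k. field_norm (ratext F F) (ratext F (L i)) (Fract (tuple_numer D n k g i) (tuple_denom D n k g)))
      = (\<Prod>i<Suc k. field_norm (ratext F F) (ratext F (L i)) (norm_one_tuple D n k (\<lambda>j. Fract (g j) 1) i))"
    using g by (intro prod.cong refl arg_cong[of _ _ "field_norm _ _"] Fract_tuple_numer) auto
  also have "\<dots> = 1"
  proof (rule prod_field_norm_norm_one_tuple[OF ratext_subfield[OF F]])
    show "\<forall>i\<le>k. finite_ext (ratext F F) (ratext F (L i)) \<and> ext_degree (ratext F F) (ratext F (L i)) = D i"
      using L F by (simp add: D_def finite_ext_ratext ext_degree_ratext)
    show "\<forall>j<k. Fract (g j) 1 \<in> ratext F F \<and> Fract (g j) 1 \<noteq> 0"
    proof (intro allI impI conjI)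
      fix j assume "j < k"
      then show "Fract (g j) 1 \<in> ratext F F"
        unfolding ratext_iff using g polys_over_one[OF F] by (intro exI[of _ "g j"] exI[of _ 1]) simp
      show "Fract (g j) 1 \<noteq> 0"
        using g \<open>j < k\<close> by (simp add: Fract_eq_0_iff)
    qed
  qed (use d in \<open>simp add: D_def\<close>)
  finally show ?thesis .
qed

lemma R_step_norm_one_tuple:
  assumes F: "is_subfield F" and L: "\<forall>i\<le>k. is_subfield (L i) \<and> F \<subseteq> L i \<and> finite_ext F (L i)"
    and d: "\<forall>i\<le>k. ext_degree F (L i) dvd n" and \<alpha>: "\<forall>j<k. \<alpha> j \<in> F \<and> \<alpha> j \<noteq> 0"
  shows "R_step F L (Suc k) (\<lambda>_. 1) (norm_one_tuple (\<lambda>i. ext_degree F (L i)) n k \<alpha>)"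
proof -
  define D where "D = (\<lambda>i. ext_degree F (L i))"
  define g where "g j = [:1, \<alpha> j - 1:]" for j
  define q where "q = tuple_denom D n k g"
  define P where "P = tuple_numer D n k g"
  have g: "poly (g j) 0 = 1" "poly (g j) 1 = \<alpha> j" "g j \<noteq> 0" for j
    by (simp_all add: g_def)
  have gF: "\<forall>j<k. g j \<in> polys_over F"
    using \<alpha> unfolding g_def
    by (auto intro!: polys_over_pCons[OF F] polys_over_zero[OF F] subfield_one[OF F] subfield_diff[OF F])
  then have qF: "q \<in> polys_over F" and PF: "P i \<in> polys_over F" for i
    unfolding q_def P_def using polys_over_tuple_numer_denom[OF F] by blast+
  have q0: "poly q 0 = 1" and q1: "poly q 1 \<noteq> 0"
    using \<alpha> by (simp_all add: q_def tuple_denom_def poly_prod g)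
  have norm: "(\<Prod>i<Suc k. field_norm (ratext F F) (ratext F (L i)) (Fract (P i) q)) = 1"
    unfolding P_def q_def D_def using L gF g(3) by (intro prod_field_norm_ratext_tuple[OF F _ d]) simp_all
  have PL: "\<forall>i<Suc k. \<forall>j. coeff (P i) j \<in> L i"
    using PF L unfolding polys_over_def by (auto simp: less_Suc_eq_le)
  have at_0_1: "poly (P i) 0 / poly q 0 = 1" "poly (P i) 1 / poly q 1 = norm_one_tuple D n k \<alpha> i"
    if "i < Suc k" for i
  proof -
    have "i \<le> k"
      using that by simp
    then have "poly (P i) t / poly q t = norm_one_tuple D n k (\<lambda>j. poly (g j) t) i" if "poly q t \<noteq> 0" for t
      using that unfolding P_def q_def by (rule poly_tuple_numer_divide[rotated])
    from this[of 0] this[of 1] q0 q1 show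
      "poly (P i) 0 / poly q 0 = 1" "poly (P i) 1 / poly q 1 = norm_one_tuple D n k \<alpha> i"
      by (simp_all add: g norm_one_tuple_one)
  qed
  show ?thesis
    unfolding R_step_def D_def[symmetric]
    using PL qF q0 q1 norm at_0_1
    by (intro exI[of _ P] exI[of _ q]) (auto simp: polys_over_def norm_one_tuple_def)
qed

theorem mainTheorem20:
  fixes F :: "'k::field set" and L :: "nat \<Rightarrow> 'k set" and m :: nat and \<alpha> :: "nat \<Rightarrow> 'k"
  assumes "is_subfield F"
    and "m \<ge> 1"
    and "\<forall>i<m. is_subfield (L i) \<and> F \<subseteq> L i \<and> finite_ext F (L i) \<and> separable_ext F (L i)"
    and "\<forall>i<m - 1. \<alpha> i \<in> F \<and> \<alpha> i \<noteq> 0"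
  defines "n \<equiv> Lcm ((\<lambda>i. ext_degree F (L i)) ` {..<m})"
  shows "(\<lambda>i. if i < m - 1 then \<alpha> i ^ (n div ext_degree F (L i))
             else if i = m - 1 then inverse (\<Prod>j<m - 1. \<alpha> j ^ (n div ext_degree F (L (m - 1))))
             else 1) \<in> RT_pts F L m"
proof -
  define k where "k = m - 1"
  have m: "m = Suc k"
    using assms(2) by (simp add: k_def)
  have L: "\<forall>i\<le>k. is_subfield (L i) \<and> F \<subseteq> L i \<and> finite_ext F (L i)"
    using assms(3) by (simp add: m less_Suc_eq_le)
  have d: "\<forall>i\<le>k. ext_degree F (L i) dvd n"
    unfolding n_def m by (auto intro: dvd_Lcm)
  have \<alpha>: "\<forall>j<k. \<alpha> j \<in> F \<and> \<alpha> j \<noteq> 0"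
    using assms(4) by (simp add: k_def)
  have "norm_one_tuple (\<lambda>i. ext_degree F (L i)) n k \<alpha> \<in> RT_pts F L m"
    unfolding RT_pts_def m
    using norm_one_tuple_in_torus_pts[OF assms(1) _ d \<alpha>] R_step_norm_one_tuple[OF assms(1) L d \<alpha>] L
    by blast
  then show ?thesis
    unfolding norm_one_tuple_def[abs_def] k_def .
qed

end
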